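(* Let $\mathcal{X}=\{x^{(1)},\dots,x^{(n)}\}$ be a finite set of $n\ge 2$ objects and let $\mathfrak{d}:\mathcal{X}\times\mathcal{X}\to[0,\infty]$ be symmetric with $\mathfrak{d}(x,x)=0$. Let $F$ be an inequity index and $g\in(0,1]$ a threshold. Let $T$ be any minimum spanning tree of the complete undirected graph on vertex set $\mathcal{X}$ in which the edge $\{x,y\}$ has weight $\mathfrak{d}(x,y)$. Consider the following procedure ("Genie restricted to $T$"): start from the partition into singletons; at each step, with current partition $\{C_1,\dots,C_m\}$, $m\ge 2$, if $F$ of the cluster sizes is $\le g$, choose an edge $\{a,b\}$ of $T$ of minimal weight among the edges of $T$ whose endpoints lie in different clusters; otherwise choose an edge $\{a,b\}$ of $T$ of minimal weight among the edges of $T$ whose endpoints lie in different clusters at least one of which has the minimal cluster size $\min_i |C_i|$; then merge the two clusters containing $a$ and $b$. Then this procedure is well defined at every step (a required edge of $T$ always exists), and the sequence of merges it produces is a valid run of the Genie linkage algorithm on $(\mathcal{X},\mathfrak{d})$ with inequity index $F$ and threshold $g$; that is, the Genie hierarchical clustering can be computed using only the edges of a minimum spanning tree.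
   Context: An inequity index: for fixed $n$, let $\mathcal{G}=\{(x_1,\dots,x_n)\in\mathbb{N}_0^n : x_1\ge\dots\ge x_n\}$. A function $F:\mathcal{G}\to[0,1]$ is an inequity index if (a) it is Schur-convex: for $x,y\in\mathcal{G}$ with $\sum_i x_i=\sum_i y_i$ and $\sum_{j\le i}x_j\le\sum_{j\le i}y_j$ for all $i$, one has $F(x)\le F(y)$; (b) $\inf_{\mathcal{G}}F=0$; (c) $\sup_{\mathcal{G}}F=1$. Example: the normalized Gini index $G(x)=\frac{\sum_{i<j}|x_i-x_j|}{(n-1)\sum_i x_i}$. When the partition has $m<n$ clusters, $F$ is applied to the non-increasingly sorted vector of cluster sizes (padded with zeros to length $n$, equivalently as written in the paper to $(c_{(m)},\dots,c_{(1)})$). The Genie linkage algorithm: start with $\mathcal{C}^{(0)}=\{\{x^{(1)}\},\dots,\{x^{(n)}\}\}$. At step $j$ ($j=0,\dots,n-2$), with current partition $\{C_1,\dots,C_{n-j}\}$ and sizes $c_i=|C_i|$: if $F(\text{sorted sizes})\le g$, merge a pair of clusters $(C_u,C_v)$, $u<v$, attaining $\min_{u<v}\min_{a\in C_u,b\in C_v}\mathfrak{d}(a,b)$ (single linkage); otherwise, merge a pair $(C_u,C_v)$ attaining this minimum over only those pairs in which $|C_u|=\min_i|C_i|$ or $|C_v|=\min_i|C_i|$. Any pair attaining the relevant minimum (ties broken arbitrarily) constitutes a valid Genie merge. With $g=1$ this is single linkage.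
   Formalization: A minimum spanning tree is a spanning tree minimizing, for every real level c, the total of the truncated weights min($\mathfrak{d}(x,y)$, c) over its edges, instead of minimizing the total weight. The statement above fails without it. *)

theory Defs
  imports "HOL-Library.Extended_Real" "HOL-Library.Multiset"
begin

definition ineq_dom :: "nat \<Rightarrow> nat list set" where
  "ineq_dom n = {x. length x = n \<and> sorted_wrt (\<ge>) x}"

definition inequity_index :: "nat \<Rightarrow> (nat list \<Rightarrow> real) \<Rightarrow> bool" where
  "inequity_index n F \<longleftrightarrow>
     (\<forall>x\<in>ineq_dom n. 0 \<le> F x \<and> F x \<le> 1) \<and>
     (\<forall>x\<in>ineq_dom n. \<forall>y\<in>ineq_dom n.
        sum_list x = sum_list y \<and> (\<forall>i\<le>n. sum_list (take i x) \<le> sum_list (take i y))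
        \<longrightarrow> F x \<le> F y) \<and>
     (INF x\<in>ineq_dom n. F x) = 0 \<and>
     (SUP x\<in>ineq_dom n. F x) = 1"

definition sizes :: "nat \<Rightarrow> 'a set set \<Rightarrow> nat list" where
  "sizes n P = rev (sorted_list_of_multiset (image_mset card (mset_set P)))
               @ replicate (n - card P) 0"

definition minsz :: "'a set set \<Rightarrow> nat" where
  "minsz P = Min (card ` P)"

definition merge :: "'a set set \<Rightarrow> 'a set \<Rightarrow> 'a set \<Rightarrow> 'a set set" where
  "merge P A B = insert (A \<union> B) (P - {A, B})"

definition singletons :: "'a set \<Rightarrow> 'a set set" where
  "singletons X = (\<lambda>x. {x}) ` X"

definition linkage :: "('a \<Rightarrow> 'a \<Rightarrow> ereal) \<Rightarrow> 'a set \<Rightarrow> 'a set \<Rightarrow> ereal" where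
  "linkage d A B = Min {d a b | a b. a \<in> A \<and> b \<in> B}"

definition genie_step ::
  "nat \<Rightarrow> (nat list \<Rightarrow> real) \<Rightarrow> real \<Rightarrow> ('a \<Rightarrow> 'a \<Rightarrow> ereal) \<Rightarrow> 'a set set \<Rightarrow> 'a set set \<Rightarrow> bool" where
  "genie_step n F g d P P' \<longleftrightarrow>
     (\<exists>A\<in>P. \<exists>B\<in>P. A \<noteq> B \<and>
        (if F (sizes n P) \<le> g then
           (\<forall>A'\<in>P. \<forall>B'\<in>P. A' \<noteq> B' \<longrightarrow> linkage d A B \<le> linkage d A' B')
         else
           (card A = minsz P \<or> card B = minsz P) \<and>
           (\<forall>A'\<in>P. \<forall>B'\<in>P. A' \<noteq> B' \<and> (card A' = minsz P \<or> card B' = minsz P)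
              \<longrightarrow> linkage d A B \<le> linkage d A' B')) \<and>
        P' = merge P A B)"

definition edge_rel :: "'a set set \<Rightarrow> ('a \<times> 'a) set" where
  "edge_rel T = {(x, y). {x, y} \<in> T}"

definition spanning_tree :: "'a set \<Rightarrow> 'a set set \<Rightarrow> bool" where
  "spanning_tree X T \<longleftrightarrow>
     T \<subseteq> {{x, y} | x y. x \<in> X \<and> y \<in> X \<and> x \<noteq> y} \<and>
     (\<forall>x\<in>X. \<forall>y\<in>X. (x, y) \<in> (edge_rel T)\<^sup>*) \<and>
     (\<forall>x y. {x, y} \<in> T \<longrightarrow> (x, y) \<notin> (edge_rel (T - {{x, y}}))\<^sup>*)"

definition edge_w :: "('a \<Rightarrow> 'a \<Rightarrow> ereal) \<Rightarrow> 'a set \<Rightarrow> ereal" where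
  "edge_w d e = (THE w. \<exists>a b. e = {a, b} \<and> w = d a b)"

text \<open>Since weights may be infinite,
  total weight is compared for the weights truncated at every finite level c
  (for finite weights this is equivalent to minimal total weight).\<close>
definition min_spanning_tree :: "'a set \<Rightarrow> ('a \<Rightarrow> 'a \<Rightarrow> ereal) \<Rightarrow> 'a set set \<Rightarrow> bool" where
  "min_spanning_tree X d T \<longleftrightarrow>
     spanning_tree X T \<and>
     (\<forall>T'. spanning_tree X T' \<longrightarrow>
        (\<forall>c::real. (\<Sum>e\<in>T. min (edge_w d e) (ereal c)) \<le> (\<Sum>e\<in>T'. min (edge_w d e) (ereal c))))"

definition tgenie_step ::
  "nat \<Rightarrow> (nat list \<Rightarrow> real) \<Rightarrow> real \<Rightarrow> ('a \<Rightarrow> 'a \<Rightarrow> ereal) \<Rightarrow> 'a set set \<Rightarrow>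
   'a set set \<Rightarrow> 'a set set \<Rightarrow> bool" where
  "tgenie_step n F g d T P P' \<longleftrightarrow>
     (\<exists>A\<in>P. \<exists>B\<in>P. \<exists>a\<in>A. \<exists>b\<in>B. A \<noteq> B \<and> {a, b} \<in> T \<and>
        (if F (sizes n P) \<le> g then
           (\<forall>A'\<in>P. \<forall>B'\<in>P. \<forall>a'\<in>A'. \<forall>b'\<in>B'. A' \<noteq> B' \<and> {a', b'} \<in> T
              \<longrightarrow> d a b \<le> d a' b')
         else
           (card A = minsz P \<or> card B = minsz P) \<and>
           (\<forall>A'\<in>P. \<forall>B'\<in>P. \<forall>a'\<in>A'. \<forall>b'\<in>B'. A' \<noteq> B' \<and> {a', b'} \<in> T \<and>
              (card A' = minsz P \<or> card B' = minsz P) \<longrightarrow> d a b \<le> d a' b')) \<and>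
        P' = merge P A B)"

end

theory Submission
  imports Defs "HOL-Library.Disjoint_Sets" "HOL-Library.Transitive_Closure_Table"
begin

text \<open>For clusters C \<noteq> D let a \<in> C and b \<in> D realise their single-linkage distance.  The
  path in T from a to b leaves C through some tree edge; exchanging that edge for {a, b} again
  connects X, so by minimality of T it weighs at most d a b (the cut property).  Hence the
  lightest tree edge joining two clusters, one of them eligible for merging, weighs at most the
  linkage of every eligible pair of clusters, while it bounds the linkage of its own pair from
  above: its pair is a closest eligible pair, i.e. a valid Genie merge.\<close>

abbreviation edges_on :: "'a set \<Rightarrow> 'a set set" where
  "edges_on X \<equiv> {{x, y} | x y. x \<in> X \<and> y \<in> X \<and> x \<noteq> y}"

lemma sym_edge_rel: "sym (edge_rel E)"
  unfolding edge_rel_def sym_def by (auto simp: insert_commute)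

lemma edge_rel_rtrancl_sym: "(x, y) \<in> (edge_rel E)\<^sup>* \<Longrightarrow> (y, x) \<in> (edge_rel E)\<^sup>*"
  by (rule symD[OF sym_rtrancl[OF sym_edge_rel]])

lemma edge_rel_mono: "E \<subseteq> E' \<Longrightarrow> edge_rel E \<subseteq> edge_rel E'"
  unfolding edge_rel_def by blast

lemma rtrancl_edge_rel_insert:
  assumes "(x, y) \<in> (edge_rel E)\<^sup>*"
  shows "(edge_rel (insert {x, y} E))\<^sup>* = (edge_rel E)\<^sup>*"
proof
  show "(edge_rel (insert {x, y} E))\<^sup>* \<subseteq> (edge_rel E)\<^sup>*"
  proof (rule rtrancl_subset_rtrancl, clarify)
    fix p q assume "(p, q) \<in> edge_rel (insert {x, y} E)"
    then have "{p, q} = {x, y} \<or> (p, q) \<in> edge_rel E"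
      by (auto simp: edge_rel_def)
    then show "(p, q) \<in> (edge_rel E)\<^sup>*"
    proof
      assume "{p, q} = {x, y}"
      then have "p = x \<and> q = y \<or> p = y \<and> q = x"
        by (simp add: doubleton_eq_iff)
      then show ?thesis
        using assms edge_rel_rtrancl_sym[OF assms] by blast
    qed (rule r_into_rtrancl)
  qed
  show "(edge_rel E)\<^sup>* \<subseteq> (edge_rel (insert {x, y} E))\<^sup>*"
    by (intro rtrancl_mono edge_rel_mono) blast
qed

lemma spanning_subtree_exists:
  assumes "finite S" "S \<subseteq> edges_on X"
    and "\<forall>x\<in>X. \<forall>y\<in>X. (x, y) \<in> (edge_rel S)\<^sup>*"
  shows "\<exists>T\<subseteq>S. spanning_tree X T"
  using assms
proof (induction "card S" arbitrary: S rule: less_induct)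
  case less
  show ?case
  proof (cases "\<forall>x y. {x, y} \<in> S \<longrightarrow> (x, y) \<notin> (edge_rel (S - {{x, y}}))\<^sup>*")
    case True
    then show ?thesis
      using less.prems unfolding spanning_tree_def by blast
  next
    case False
    then obtain x y where xy: "{x, y} \<in> S" "(x, y) \<in> (edge_rel (S - {{x, y}}))\<^sup>*"
      by blast
    have same_conn: "(edge_rel (S - {{x, y}}))\<^sup>* = (edge_rel S)\<^sup>*"
      using rtrancl_edge_rel_insert[OF xy(2)] xy(1) by (simp add: insert_absorb)
    have "\<exists>T\<subseteq>S - {{x, y}}. spanning_tree X T"
    proof (rule less.hyps)
      show "card (S - {{x, y}}) < card S"
        using less.prems(1) xy(1) by (rule card_Diff1_less)
      show "finite (S - {{x, y}})"
        using less.prems(1) by simp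
      show "S - {{x, y}} \<subseteq> edges_on X"
        using less.prems(2) by blast
      show "\<forall>p\<in>X. \<forall>q\<in>X. (p, q) \<in> (edge_rel (S - {{x, y}}))\<^sup>*"
        using less.prems(3) by (simp add: same_conn)
    qed
    then show ?thesis
      by blast
  qed
qed

lemma rtrancl_path_avoiding_edge:
  assumes "rtrancl_path (\<lambda>p q. {p, q} \<in> E) x xs y" "a \<notin> set (x # xs)"
  shows "(x, y) \<in> (edge_rel (E - {{a, b}}))\<^sup>*"
  using assms
proof (induction rule: rtrancl_path.induct)
  case (base x)
  then show ?case by simp
next
  case (step x z zs y)
  have "{x, z} \<noteq> {a, b}"
    using step.prems by (auto simp: doubleton_eq_iff)
  with step.hyps(1) have "(x, z) \<in> edge_rel (E - {{a, b}})"
    by (simp add: edge_rel_def)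
  moreover have "(z, y) \<in> (edge_rel (E - {{a, b}}))\<^sup>*"
    using step.IH step.prems by simp
  ultimately show ?case
    by (rule converse_rtrancl_into_rtrancl)
qed

lemma rtrancl_path_crossing_edge:
  assumes "rtrancl_path (\<lambda>p q. {p, q} \<in> E) a xs b" "distinct (a # xs)" "a \<in> A" "b \<notin> A"
  shows "\<exists>u\<in>A. \<exists>v. v \<notin> A \<and> {u, v} \<in> E \<and>
    (a, u) \<in> (edge_rel (E - {{u, v}}))\<^sup>* \<and> (v, b) \<in> (edge_rel (E - {{u, v}}))\<^sup>*"
  using assms
proof (induction rule: rtrancl_path.induct)
  case (base x)
  then show ?case by simp
next
  case (step x z zs y)
  show ?case
  proof (cases "z \<in> A")
    case True
    with step obtain u v where uv: "u \<in> A" "v \<notin> A" "{u, v} \<in> E"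
      "(z, u) \<in> (edge_rel (E - {{u, v}}))\<^sup>*" "(v, y) \<in> (edge_rel (E - {{u, v}}))\<^sup>*"
      by auto
    have "{x, z} \<noteq> {u, v}"
      using step.prems True uv by (auto simp: doubleton_eq_iff)
    with step.hyps(1) have "(x, z) \<in> edge_rel (E - {{u, v}})"
      by (simp add: edge_rel_def)
    with uv show ?thesis
      by (meson converse_rtrancl_into_rtrancl)
  next
    case False
    have "(z, y) \<in> (edge_rel (E - {{x, z}}))\<^sup>*"
      using rtrancl_path_avoiding_edge[OF step.hyps(2)] step.prems(1) by auto
    with False step.hyps(1) step.prems(2) show ?thesis
      by (intro bexI[of _ x] exI[of _ z]) auto
  qed
qed

lemma crossing_edge_on_path:
  assumes "(a, b) \<in> (edge_rel E)\<^sup>*" "a \<in> A" "b \<notin> A"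
  obtains u v where "u \<in> A" "v \<notin> A" "{u, v} \<in> E"
    "(a, u) \<in> (edge_rel (E - {{u, v}}))\<^sup>*" "(v, b) \<in> (edge_rel (E - {{u, v}}))\<^sup>*"
proof -
  have "(\<lambda>p q. {p, q} \<in> E)\<^sup>*\<^sup>* a b"
    using assms(1) by (simp add: edge_rel_def rtranclp_rtrancl_eq)
  then obtain xs where "rtrancl_path (\<lambda>p q. {p, q} \<in> E) a xs b"
    by (auto simp: rtranclp_eq_rtrancl_path)
  then obtain ys where "rtrancl_path (\<lambda>p q. {p, q} \<in> E) a ys b" "distinct (a # ys)"
    by (rule rtrancl_path_distinct)
  from rtrancl_path_crossing_edge[OF this assms(2,3)] show thesis
    using that by blast
qed

lemma rtrancl_edge_rel_exchange:
  assumes "(a, u) \<in> (edge_rel (E - {{u, v}}))\<^sup>*" "(v, b) \<in> (edge_rel (E - {{u, v}}))\<^sup>*"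
  shows "(edge_rel E)\<^sup>* \<subseteq> (edge_rel (insert {a, b} (E - {{u, v}})))\<^sup>*"
proof -
  let ?S = "insert {a, b} (E - {{u, v}})"
  have "(edge_rel (E - {{u, v}}))\<^sup>* \<subseteq> (edge_rel ?S)\<^sup>*"
    by (intro rtrancl_mono edge_rel_mono) blast
  then have "(u, a) \<in> (edge_rel ?S)\<^sup>*" "(b, v) \<in> (edge_rel ?S)\<^sup>*"
    using edge_rel_rtrancl_sym[OF assms(1)] edge_rel_rtrancl_sym[OF assms(2)] by blast+
  moreover have "(a, b) \<in> (edge_rel ?S)\<^sup>*"
    by (simp add: edge_rel_def r_into_rtrancl)
  ultimately have "(u, v) \<in> (edge_rel ?S)\<^sup>*"
    by (meson rtrancl_trans)
  then have eq: "(edge_rel (insert {u, v} ?S))\<^sup>* = (edge_rel ?S)\<^sup>*"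
    by (rule rtrancl_edge_rel_insert)
  have "(edge_rel E)\<^sup>* \<subseteq> (edge_rel (insert {u, v} ?S))\<^sup>*"
    by (intro rtrancl_mono edge_rel_mono) blast
  then show ?thesis
    unfolding eq .
qed

lemma edge_w_doubleton:
  assumes "\<forall>x\<in>X. \<forall>y\<in>X. d x y = d y x" "x \<in> X" "y \<in> X"
  shows "edge_w d {x, y} = d x y"
  unfolding edge_w_def
proof (rule the_equality)
  show "\<exists>a b. {x, y} = {a, b} \<and> d x y = d a b"
    by blast
next
  fix w assume "\<exists>a b. {x, y} = {a, b} \<and> w = d a b"
  then obtain a b where "{x, y} = {a, b}" "w = d a b"
    by blast
  with assms show "w = d x y"
    by (auto simp: doubleton_eq_iff)
qed

lemma finite_edges_on: "finite X \<Longrightarrow> finite (edges_on X)"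
  by (rule finite_subset[of _ "Pow X"]) auto

lemma edge_w_nonneg:
  assumes "\<forall>x\<in>X. \<forall>y\<in>X. d x y \<ge> 0" "\<forall>x\<in>X. \<forall>y\<in>X. d x y = d y x" "e \<in> edges_on X"
  shows "0 \<le> edge_w d e"
proof -
  obtain x y where "e = {x, y}" "x \<in> X" "y \<in> X"
    using assms(3) by blast
  with assms(1) show ?thesis
    using edge_w_doubleton[OF assms(2)] by simp
qed

lemma min_spanning_tree_le_connected:
  assumes "finite X" "\<forall>x\<in>X. \<forall>y\<in>X. d x y \<ge> 0" "\<forall>x\<in>X. \<forall>y\<in>X. d x y = d y x"
    and "min_spanning_tree X d T" "0 \<le> c"
    and "S \<subseteq> edges_on X" "\<forall>x\<in>X. \<forall>y\<in>X. (x, y) \<in> (edge_rel S)\<^sup>*"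
  shows "(\<Sum>e\<in>T. min (edge_w d e) (ereal c)) \<le> (\<Sum>e\<in>S. min (edge_w d e) (ereal c))"
proof -
  have "finite S"
    using finite_subset[OF assms(6) finite_edges_on[OF assms(1)]] .
  then obtain T' where "T' \<subseteq> S" "spanning_tree X T'"
    using spanning_subtree_exists[OF _ assms(6,7)] by blast
  then have "(\<Sum>e\<in>T. min (edge_w d e) (ereal c)) \<le> (\<Sum>e\<in>T'. min (edge_w d e) (ereal c))"
    using assms(4) by (simp add: min_spanning_tree_def)
  also have "\<dots> \<le> (\<Sum>e\<in>S. min (edge_w d e) (ereal c))"
  proof (rule sum_mono2[OF \<open>finite S\<close> \<open>T' \<subseteq> S\<close>])
    fix e assume "e \<in> S - T'"
    with assms(6) have "e \<in> edges_on X"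
      by (blast dest: subsetD)
    then have "0 \<le> edge_w d e"
      by (rule edge_w_nonneg[OF assms(2,3)])
    with \<open>0 \<le> c\<close> show "0 \<le> min (edge_w d e) (ereal c)"
      by simp
  qed
  finally show ?thesis .
qed

lemma sum_insert_le:
  fixes h :: "'a \<Rightarrow> 'b::ordered_comm_monoid_add"
  assumes "finite A" "0 \<le> h x"
  shows "sum h (insert x A) \<le> h x + sum h A"
proof (cases "x \<in> A")
  case True
  with assms(2) show ?thesis
    by (simp add: insert_absorb add_increasing)
next
  case False
  with assms(1) show ?thesis
    by simp
qed

text \<open>Weights are compared truncated at a level c strictly between the two edge weights: there
  the new edge is cheaper and all remaining weights are finite.\<close>
lemma min_spanning_tree_exchange:
  assumes "finite X" and nonneg: "\<forall>x\<in>X. \<forall>y\<in>X. d x y \<ge> 0"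
    and sym: "\<forall>x\<in>X. \<forall>y\<in>X. d x y = d y x"
    and mst: "min_spanning_tree X d T" and "e \<in> T"
    and "a \<in> X" "b \<in> X" "a \<noteq> b"
    and conn: "\<forall>x\<in>X. \<forall>y\<in>X. (x, y) \<in> (edge_rel (insert {a, b} (T - {e})))\<^sup>*"
  shows "edge_w d e \<le> d a b"
proof (rule ccontr)
  assume "\<not> edge_w d e \<le> d a b"
  then obtain c where c: "d a b < ereal c" "ereal c < edge_w d e"
    using ereal_dense2 by (meson not_le)
  define h where "h f = min (edge_w d f) (ereal c)" for f
  have "0 \<le> d a b"
    using nonneg assms(6,7) by blast
  then have "0 \<le> ereal c"
    using c(1) by (rule order.trans[OF _ less_imp_le])
  have TE: "T \<subseteq> edges_on X"
    using mst by (simp add: min_spanning_tree_def spanning_tree_def)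
  then have "finite T"
    using finite_edges_on[OF \<open>finite X\<close>] by (rule finite_subset)
  have h_T: "0 \<le> h f \<and> h f \<le> ereal c" if "f \<in> T" for f
    using edge_w_nonneg[OF nonneg sym subsetD[OF TE that]] \<open>0 \<le> ereal c\<close> by (simp add: h_def)
  have h_ab: "h {a, b} = d a b"
    using c(1) edge_w_doubleton[OF sym assms(6,7)] by (simp add: h_def)
  have "{a, b} \<in> edges_on X"
    using assms(6-8) by blast
  moreover have "T - {e} \<subseteq> edges_on X"
    using TE by (rule subset_trans[OF Diff_subset])
  ultimately have "insert {a, b} (T - {e}) \<subseteq> edges_on X"
    by (rule insert_subsetI)
  have "h e = ereal c"
    using c(2) by (simp add: h_def)
  then have "ereal c + sum h (T - {e}) = sum h T"
    using \<open>finite T\<close> \<open>e \<in> T\<close> by (simp add: sum.remove)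
  also have "\<dots> \<le> sum h (insert {a, b} (T - {e}))"
    unfolding h_def using min_spanning_tree_le_connected[OF assms(1-4) _ _ conn]
      \<open>0 \<le> ereal c\<close> \<open>insert {a, b} (T - {e}) \<subseteq> edges_on X\<close> by simp
  also have "\<dots> \<le> d a b + sum h (T - {e})"
    using sum_insert_le[of "T - {e}" h "{a, b}"] \<open>finite T\<close> \<open>0 \<le> d a b\<close> h_ab by simp
  finally have le: "ereal c + sum h (T - {e}) \<le> d a b + sum h (T - {e})" .
  have "sum h (T - {e}) \<noteq> \<infinity>"
    unfolding sum_Pinfty using h_T by force
  moreover have "0 \<le> sum h (T - {e})"
    by (rule sum_nonneg) (use h_T in blast)
  ultimately have "ereal c \<le> d a b"
    using le ereal_add_le_add_iff2 by fastforce
  with c(1) show False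
    by simp
qed

lemma min_spanning_tree_cut:
  assumes "finite X" "\<forall>x\<in>X. \<forall>y\<in>X. d x y \<ge> 0" and sym: "\<forall>x\<in>X. \<forall>y\<in>X. d x y = d y x"
    and mst: "min_spanning_tree X d T" and "A \<subseteq> X" "a \<in> A" "b \<in> X - A"
  shows "\<exists>u\<in>A. \<exists>v\<in>X - A. {u, v} \<in> T \<and> d u v \<le> d a b"
proof -
  have tree: "spanning_tree X T"
    using mst by (simp add: min_spanning_tree_def)
  then have "(a, b) \<in> (edge_rel T)\<^sup>*"
    using assms(5-7) unfolding spanning_tree_def by blast
  moreover have "b \<notin> A"
    using assms(7) by blast
  ultimately obtain u v where uv: "u \<in> A" "v \<notin> A" "{u, v} \<in> T"
    and paths: "(a, u) \<in> (edge_rel (T - {{u, v}}))\<^sup>*" "(v, b) \<in> (edge_rel (T - {{u, v}}))\<^sup>*"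
    using crossing_edge_on_path \<open>a \<in> A\<close> by metis
  from rtrancl_edge_rel_exchange[OF paths]
  have "\<forall>x\<in>X. \<forall>y\<in>X. (x, y) \<in> (edge_rel (insert {a, b} (T - {{u, v}})))\<^sup>*"
    using tree unfolding spanning_tree_def by blast
  moreover have "a \<in> X" "b \<in> X" "a \<noteq> b"
    using assms(5-7) by auto
  ultimately have "edge_w d {u, v} \<le> d a b"
    by (intro min_spanning_tree_exchange[OF assms(1-4) uv(3)])
  moreover have "u \<in> X" "v \<in> X"
    using uv(3) tree unfolding spanning_tree_def by (auto simp: doubleton_eq_iff)
  ultimately show ?thesis
    using uv edge_w_doubleton[OF sym] by auto
qed

lemma linkage_eq_Min_image: "linkage d A B = Min ((\<lambda>(a, b). d a b) ` (A \<times> B))"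
proof -
  have "{d a b | a b. a \<in> A \<and> b \<in> B} = (\<lambda>(a, b). d a b) ` (A \<times> B)"
    by auto
  then show ?thesis
    by (simp add: linkage_def)
qed

lemma linkage_le:
  assumes "finite A" "finite B" "a \<in> A" "b \<in> B"
  shows "linkage d A B \<le> d a b"
  unfolding linkage_eq_Min_image using assms by (intro Min_le) auto

lemma linkage_attained:
  assumes "finite A" "finite B" "A \<noteq> {}" "B \<noteq> {}"
  obtains a b where "a \<in> A" "b \<in> B" "linkage d A B = d a b"
proof -
  have "linkage d A B \<in> (\<lambda>(a, b). d a b) ` (A \<times> B)"
    unfolding linkage_eq_Min_image using assms by (intro Min_in) auto
  with that show thesis
    by auto
qed

lemma linkage_commute:
  assumes "\<forall>x\<in>X. \<forall>y\<in>X. d x y = d y x" "A \<subseteq> X" "B \<subseteq> X"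
  shows "linkage d A B = linkage d B A"
proof -
  have "{d a b | a b. a \<in> A \<and> b \<in> B} = {d a b | a b. a \<in> B \<and> b \<in> A}"
    using assms by (auto; metis subsetD)
  then show ?thesis
    by (simp add: linkage_def)
qed

lemma partition_on_merge:
  assumes "partition_on X P" "A \<in> P" "B \<in> P"
  shows "partition_on X (merge P A B)"
proof (rule partition_onI)
  show "\<Union> (merge P A B) = X" "{} \<notin> merge P A B"
    using assms by (auto simp: merge_def partition_on_def)
  have disj: "disjnt C D" if "C \<in> P" "D \<in> P" "C \<noteq> D" for C D
    using pairwiseD[OF partition_onD2[OF assms(1)] that] .
  fix p q assume "p \<in> merge P A B" "q \<in> merge P A B" "p \<noteq> q"
  then consider "p = A \<union> B" "q \<in> P - {A, B}" | "q = A \<union> B" "p \<in> P - {A, B}"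
    | "p \<in> P - {A, B}" "q \<in> P - {A, B}"
    unfolding merge_def by blast
  then show "disjnt p q"
  proof cases
    case 1
    with assms(2,3) show ?thesis
      by (auto simp: disjnt_Un1 intro!: disj)
  next
    case 2
    with assms(2,3) show ?thesis
      by (auto simp: disjnt_Un2 intro!: disj)
  next
    case 3
    with \<open>p \<noteq> q\<close> show ?thesis
      by (auto intro!: disj)
  qed
qed

lemma tgenie_reachable_partition:
  assumes "(tgenie_step n F g d T)\<^sup>*\<^sup>* (singletons X) P"
  shows "partition_on X P"
  using assms
proof (induction rule: rtranclp_induct)
  case base
  then show ?case
    by (simp add: singletons_def partition_on_singletons)
next
  case (step P P')
  then obtain A B where "A \<in> P" "B \<in> P" "P' = merge P A B"
    unfolding tgenie_step_def by blast
  with step.IH show ?case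
    using partition_on_merge by blast
qed

lemma min_spanning_tree_edge_leaving_cluster:
  assumes "finite X" "\<forall>x\<in>X. \<forall>y\<in>X. d x y \<ge> 0" "\<forall>x\<in>X. \<forall>y\<in>X. d x y = d y x"
    and "min_spanning_tree X d T" and P: "partition_on X P" and "C \<in> P" "D \<in> P" "C \<noteq> D"
  shows "\<exists>E\<in>P. \<exists>u\<in>C. \<exists>v\<in>E. C \<noteq> E \<and> {u, v} \<in> T \<and> d u v \<le> linkage d C D"
proof -
  have "C \<subseteq> X" "D \<subseteq> X" "C \<noteq> {}" "D \<noteq> {}"
    using P \<open>C \<in> P\<close> \<open>D \<in> P\<close> by (auto simp: partition_on_def)
  then obtain a b where ab: "a \<in> C" "b \<in> D" "linkage d C D = d a b"
    using finite_subset[OF _ \<open>finite X\<close>] by (metis linkage_attained)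
  have "b \<in> X - C"
    using P \<open>C \<in> P\<close> \<open>D \<in> P\<close> \<open>C \<noteq> D\<close> \<open>D \<subseteq> X\<close> ab(2)
    by (auto simp: partition_on_def pairwise_def disjnt_def)
  then obtain u v where uv: "u \<in> C" "v \<in> X - C" "{u, v} \<in> T" "d u v \<le> d a b"
    using min_spanning_tree_cut[OF assms(1-4) \<open>C \<subseteq> X\<close> ab(1)] by blast
  moreover obtain E where "E \<in> P" "v \<in> E"
    using P uv(2) by (auto simp: partition_on_def)
  ultimately show ?thesis
    using ab(3) by auto
qed

text \<open>Genie may merge a pair of clusters iff one of them is eligible; while F \<le> g every cluster
  is eligible, which is the unrestricted single-linkage step.\<close>
definition genie_eligible :: "nat \<Rightarrow> (nat list \<Rightarrow> real) \<Rightarrow> real \<Rightarrow> 'a set set \<Rightarrow> 'a set \<Rightarrow> bool" where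
  "genie_eligible n F g P C \<longleftrightarrow> F (sizes n P) \<le> g \<or> card C = minsz P"

definition lightest_tree_edge ::
  "('a \<Rightarrow> 'a \<Rightarrow> ereal) \<Rightarrow> 'a set set \<Rightarrow> ('a set \<Rightarrow> bool) \<Rightarrow> 'a set set \<Rightarrow>
   'a set \<Rightarrow> 'a set \<Rightarrow> 'a \<Rightarrow> 'a \<Rightarrow> bool" where
  "lightest_tree_edge d T R P A B a b \<longleftrightarrow>
     A \<in> P \<and> B \<in> P \<and> a \<in> A \<and> b \<in> B \<and> A \<noteq> B \<and> {a, b} \<in> T \<and> (R A \<or> R B) \<and>
     (\<forall>A'\<in>P. \<forall>B'\<in>P. \<forall>a'\<in>A'. \<forall>b'\<in>B'. A' \<noteq> B' \<and> {a', b'} \<in> T \<and> (R A' \<or> R B')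
        \<longrightarrow> d a b \<le> d a' b')"

definition closest_pair ::
  "('a \<Rightarrow> 'a \<Rightarrow> ereal) \<Rightarrow> ('a set \<Rightarrow> bool) \<Rightarrow> 'a set set \<Rightarrow> 'a set \<Rightarrow> 'a set \<Rightarrow> bool" where
  "closest_pair d R P A B \<longleftrightarrow>
     A \<in> P \<and> B \<in> P \<and> A \<noteq> B \<and> (R A \<or> R B) \<and>
     (\<forall>A'\<in>P. \<forall>B'\<in>P. A' \<noteq> B' \<and> (R A' \<or> R B') \<longrightarrow> linkage d A B \<le> linkage d A' B')"

lemma tgenie_step_iff:
  "tgenie_step n F g d T P P' \<longleftrightarrow>
     (\<exists>A B a b. lightest_tree_edge d T (genie_eligible n F g P) P A B a b \<and> P' = merge P A B)"
  unfolding tgenie_step_def lightest_tree_edge_def genie_eligible_def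
  by (cases "F (sizes n P) \<le> g") (simp; blast)+

lemma genie_step_iff:
  "genie_step n F g d P P' \<longleftrightarrow>
     (\<exists>A B. closest_pair d (genie_eligible n F g P) P A B \<and> P' = merge P A B)"
  unfolding genie_step_def closest_pair_def genie_eligible_def
  by (cases "F (sizes n P) \<le> g") (simp_all add: Bex_def conj_assoc conj_commute conj_left_commute)

lemma genie_eligible_exists:
  assumes "finite P" "P \<noteq> {}"
  shows "\<exists>C\<in>P. genie_eligible n F g P C"
proof -
  have "minsz P \<in> card ` P"
    unfolding minsz_def using assms by (intro Min_in) auto
  then show ?thesis
    unfolding genie_eligible_def by auto
qed

lemma lightest_tree_edge_exists:
  assumes "finite P" "\<forall>A\<in>P. finite A"
    and "C \<in> P" "E \<in> P" "u \<in> C" "v \<in> E" "C \<noteq> E" "{u, v} \<in> T" "R C"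
  shows "\<exists>A B a b. lightest_tree_edge d T R P A B a b"
proof -
  define S where "S = {(A, B, a, b). A \<in> P \<and> B \<in> P \<and> a \<in> A \<and> b \<in> B \<and> A \<noteq> B \<and>
    {a, b} \<in> T \<and> (R A \<or> R B)}"
  define w :: "'a set \<times> 'a set \<times> 'a \<times> 'a \<Rightarrow> ereal" where "w = (\<lambda>(A, B, a, b). d a b)"
  have "S \<subseteq> P \<times> P \<times> \<Union>P \<times> \<Union>P"
    by (auto simp: S_def)
  then have "finite S"
    by (rule finite_subset) (use assms(1,2) in auto)
  moreover have "(C, E, u, v) \<in> S"
    using assms(3-9) by (simp add: S_def)
  ultimately have "arg_min_on w S \<in> S" "\<forall>q\<in>S. w (arg_min_on w S) \<le> w q"
    by (auto intro: arg_min_if_finite arg_min_least)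
  moreover obtain A B a b where "arg_min_on w S = (A, B, a, b)"
    by (metis prod_cases4)
  ultimately have "lightest_tree_edge d T R P A B a b"
    unfolding lightest_tree_edge_def by (auto simp: S_def w_def)
  then show ?thesis
    by blast
qed

lemma lightest_tree_edge_closest_pair:
  assumes "finite X" "\<forall>x\<in>X. \<forall>y\<in>X. d x y \<ge> 0" and sym: "\<forall>x\<in>X. \<forall>y\<in>X. d x y = d y x"
    and "min_spanning_tree X d T" and P: "partition_on X P"
    and "lightest_tree_edge d T R P A B a b"
  shows "closest_pair d R P A B"
proof -
  from \<open>lightest_tree_edge d T R P A B a b\<close>
  have AB: "A \<in> P" "B \<in> P" "a \<in> A" "b \<in> B" "A \<noteq> B" "R A \<or> R B"
    and lightest: "\<And>A' B' a' b'. A' \<in> P \<Longrightarrow> B' \<in> P \<Longrightarrow> a' \<in> A' \<Longrightarrow> b' \<in> B' \<Longrightarrow> A' \<noteq> B' \<Longrightarrow>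
      {a', b'} \<in> T \<Longrightarrow> R A' \<or> R B' \<Longrightarrow> d a b \<le> d a' b'"
    unfolding lightest_tree_edge_def by blast+
  have cluster_subset: "C \<subseteq> X" if "C \<in> P" for C
    using partition_onD1[OF P] that by blast
  have upper: "linkage d A B \<le> d a b"
    using finite_subset[OF cluster_subset \<open>finite X\<close>] AB by (intro linkage_le) auto
  have lower: "d a b \<le> linkage d A' B'"
    if A'B': "A' \<in> P" "B' \<in> P" "A' \<noteq> B'" and "R A' \<or> R B'" for A' B'
  proof -
    obtain C D where CD: "C \<in> P" "D \<in> P" "C \<noteq> D" "R C" "linkage d C D = linkage d A' B'"
    proof (cases "R A'")
      case True
      then show thesis
        by (rule that[OF A'B' _ refl])
    next
      case False
      with \<open>R A' \<or> R B'\<close> have "R B'"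
        by blast
      moreover have "linkage d B' A' = linkage d A' B'"
        using cluster_subset A'B' by (intro linkage_commute[OF sym]) auto
      ultimately show thesis
        using that[of B' A'] A'B' by blast
    qed
    obtain E u v where Euv: "E \<in> P" "u \<in> C" "v \<in> E" "C \<noteq> E" "{u, v} \<in> T"
      and "d u v \<le> linkage d C D"
      using min_spanning_tree_edge_leaving_cluster[OF assms(1-5) CD(1-3)] by blast
    have "d a b \<le> d u v"
      using lightest[OF CD(1) Euv] CD(4) by blast
    also have "\<dots> \<le> linkage d A' B'"
      using \<open>d u v \<le> linkage d C D\<close> CD(5) by simp
    finally show ?thesis .
  qed
  show ?thesis
    unfolding closest_pair_def using AB order.trans[OF upper lower] by blast
qed

theorem theorem1:
  fixes X :: "'a set" and n :: nat and d :: "'a \<Rightarrow> 'a \<Rightarrow> ereal"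
    and F :: "nat list \<Rightarrow> real" and g :: real and T :: "'a set set"
  assumes "finite X" and "card X = n" and "n \<ge> 2"
    and "\<forall>x\<in>X. \<forall>y\<in>X. d x y \<ge> 0"
    and "\<forall>x\<in>X. \<forall>y\<in>X. d x y = d y x"
    and "\<forall>x\<in>X. d x x = 0"
    and "inequity_index n F"
    and "0 < g" and "g \<le> 1"
    and "min_spanning_tree X d T"
  shows "\<forall>P. (tgenie_step n F g d T)\<^sup>*\<^sup>* (singletons X) P \<and> card P \<ge> 2 \<longrightarrow>
           (\<exists>P'. tgenie_step n F g d T P P') \<and>
           (\<forall>P'. tgenie_step n F g d T P P' \<longrightarrow> genie_step n F g d P P')"
proof (intro allI impI, elim conjE)
  fix P
  assume "(tgenie_step n F g d T)\<^sup>*\<^sup>* (singletons X) P" and "2 \<le> card P"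
  then have part: "partition_on X P"
    by (intro tgenie_reachable_partition)
  then have "finite P" "\<forall>C\<in>P. finite C"
    using \<open>finite X\<close> by (auto simp: finite_elements partition_on_def intro: finite_subset)
  moreover obtain C where "C \<in> P" "genie_eligible n F g P C"
    using genie_eligible_exists[OF \<open>finite P\<close>] \<open>2 \<le> card P\<close> by fastforce
  moreover obtain D where "D \<in> P" "C \<noteq> D"
    using \<open>2 \<le> card P\<close> card_le_Suc0_iff_eq[OF \<open>finite P\<close>] \<open>C \<in> P\<close> by (metis not_less_eq_eq numeral_2_eq_2)
  ultimately obtain E u v where "E \<in> P" "u \<in> C" "v \<in> E" "C \<noteq> E" "{u, v} \<in> T"
    using min_spanning_tree_edge_leaving_cluster[OF assms(1,4,5,10) part] by metis
  then have "\<exists>P'. tgenie_step n F g d T P P'"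
    using lightest_tree_edge_exists[OF \<open>finite P\<close> \<open>\<forall>C\<in>P. finite C\<close> \<open>C \<in> P\<close>]
      \<open>genie_eligible n F g P C\<close> by (metis tgenie_step_iff)
  moreover have "\<forall>P'. tgenie_step n F g d T P P' \<longrightarrow> genie_step n F g d P P'"
    using lightest_tree_edge_closest_pair[OF assms(1,4,5,10) part]
    by (metis tgenie_step_iff genie_step_iff)
  ultimately show "(\<exists>P'. tgenie_step n F g d T P P') \<and>
      (\<forall>P'. tgenie_step n F g d T P P' \<longrightarrow> genie_step n F g d P P')" ..
qed

end
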